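(* Let $\Lambda\colon L\times W\to[0,\infty]$ and $\Lambda'\colon L'\times W'\to[0,\infty]$ be Dowker dissimilarities that are $(\alpha,\alpha')$-interleaved (as Dowker dissimilarities). Then the Dowker nerves $N\Lambda$ and $N\Lambda'$ are $(\alpha,\alpha')$-interleaved filtered simplicial complexes.
   Context: A Dowker dissimilarity is a function $\Lambda\colon L\times W\to[0,\infty]$ for sets $L,W$. Its Dowker nerve $N\Lambda$ is the filtered simplicial complex with vertex set $L$ whose level $t\in[0,\infty]$ is $N\Lambda_t=\{\text{finite }\sigma\subseteq L\mid \exists w\in W \text{ with }\Lambda(l,w)<t\ \forall l\in\sigma\}$. Let $\alpha,\alpha'\colon[0,\infty]\to[0,\infty]$ be order preserving with $t\le\alpha(t)$, $t\le\alpha'(t)$ for all $t$. An $(\alpha,\alpha')$-interleaving of Dowker dissimilarities $\Lambda,\Lambda'$ is a pair of relations $C\subseteq L\times L'$, $C'\subseteq L'\times L$ such that: (i) for every $t$ and every nonempty $\sigma\in N\Lambda_t$, the set $C(\sigma)=\{l'\mid\exists l\in\sigma,(l,l')\in C\}$ is finite, nonempty and lies in $N\Lambda'_{\alpha(t)}$; (ii) for every $t$ and every nonempty $\tau\in N\Lambda'_t$, $C'(\tau)$ is finite, nonempty and lies in $N\Lambda_{\alpha'(t)}$; (iii) $\Delta_L\subseteq C'\circ C$ and $\Delta_{L'}\subseteq C\circ C'$, where $C'\circ C=\{(l,m)\mid\exists l':(l,l')\in C,(l',m)\in C'\}$ and $\Delta$ denotes the diagonal. Filtered simplicial complexes $K,K'$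 (i.e. $K(s)\subseteq K(t)$ subcomplexes for $s\le t$) are $(\alpha,\alpha')$-interleaved if there are continuous maps $F_t\colon|K(t)|\to|K'(\alpha(t))|$ and $G_t\colon|K'(t)|\to|K(\alpha'(t))|$ for all $t$ ($|\cdot|$ = geometric realization) such that for $s\le t$, $F_t$ composed with the inclusion $|K(s)|\to|K(t)|$ is homotopic to $F_s$ composed with the inclusion $|K'(\alpha(s))|\to|K'(\alpha(t))|$ (and likewise for $G$), $G_{\alpha(t)}\circ F_t$ is homotopic to the inclusion $|K(t)|\to|K(\alpha'(\alpha(t)))|$, and $F_{\alpha'(t)}\circ G_t$ is homotopic to the inclusion $|K'(t)|\to|K'(\alpha(\alpha'(t)))|$. *)

theory Defs
  imports "HOL-Analysis.Analysis" "HOL-Library.Extended_Nonnegative_Real"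
begin

definition dowker_nerve :: "('l \<Rightarrow> 'w \<Rightarrow> ennreal) \<Rightarrow> ennreal \<Rightarrow> 'l set set" where
  "dowker_nerve \<Lambda> t = {\<sigma>. finite \<sigma> \<and> (\<exists>w. \<forall>l\<in>\<sigma>. \<Lambda> l w < t)}"

definition dowker_interleaving ::
  "('l \<Rightarrow> 'w \<Rightarrow> ennreal) \<Rightarrow> ('l2 \<Rightarrow> 'w2 \<Rightarrow> ennreal)
   \<Rightarrow> (ennreal \<Rightarrow> ennreal) \<Rightarrow> (ennreal \<Rightarrow> ennreal)
   \<Rightarrow> ('l \<times> 'l2) set \<Rightarrow> ('l2 \<times> 'l) set \<Rightarrow> bool" where
  "dowker_interleaving \<Lambda> \<Lambda>' \<alpha> \<alpha>' C C' \<longleftrightarrow>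
     (\<forall>t. \<forall>\<sigma>\<in>dowker_nerve \<Lambda> t. \<sigma> \<noteq> {} \<longrightarrow>
        finite (C `` \<sigma>) \<and> C `` \<sigma> \<noteq> {} \<and> C `` \<sigma> \<in> dowker_nerve \<Lambda>' (\<alpha> t)) \<and>
     (\<forall>t. \<forall>\<tau>\<in>dowker_nerve \<Lambda>' t. \<tau> \<noteq> {} \<longrightarrow>
        finite (C' `` \<tau>) \<and> C' `` \<tau> \<noteq> {} \<and> C' `` \<tau> \<in> dowker_nerve \<Lambda> (\<alpha>' t)) \<and>
     Id \<subseteq> C O C' \<and> Id \<subseteq> C' O C"

definition dowker_interleaved ::
  "('l \<Rightarrow> 'w \<Rightarrow> ennreal) \<Rightarrow> ('l2 \<Rightarrow> 'w2 \<Rightarrow> ennreal)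
   \<Rightarrow> (ennreal \<Rightarrow> ennreal) \<Rightarrow> (ennreal \<Rightarrow> ennreal) \<Rightarrow> bool" where
  "dowker_interleaved \<Lambda> \<Lambda>' \<alpha> \<alpha>' \<longleftrightarrow> (\<exists>C C'. dowker_interleaving \<Lambda> \<Lambda>' \<alpha> \<alpha>' C C')"

text \<open>Closed geometric simplex spanned by a finite vertex set, as barycentric coordinate functions.\<close>
definition geom_simplex :: "'a set \<Rightarrow> ('a \<Rightarrow> real) set" where
  "geom_simplex \<sigma> = {f. (\<forall>x. 0 \<le> f x) \<and> (\<forall>x. x \<notin> \<sigma> \<longrightarrow> f x = 0) \<and> sum f \<sigma> = 1}"

definition realization_carrier :: "'a set set \<Rightarrow> ('a \<Rightarrow> real) set" where
  "realization_carrier K = (\<Union>\<sigma>\<in>K. geom_simplex \<sigma>)"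

text \<open>Geometric realization with the weak (coherent) topology w.r.t. the closed simplices.\<close>
definition realization :: "'a set set \<Rightarrow> ('a \<Rightarrow> real) topology" where
  "realization K = topology (\<lambda>U. U \<subseteq> realization_carrier K \<and>
      (\<forall>\<sigma>\<in>K. openin (subtopology euclidean (geom_simplex \<sigma>)) (U \<inter> geom_simplex \<sigma>)))"

definition filtered_interleaved ::
  "(ennreal \<Rightarrow> 'a set set) \<Rightarrow> (ennreal \<Rightarrow> 'b set set)
   \<Rightarrow> (ennreal \<Rightarrow> ennreal) \<Rightarrow> (ennreal \<Rightarrow> ennreal) \<Rightarrow> bool" where
  "filtered_interleaved K K' \<alpha> \<alpha>' \<longleftrightarrow>
    (\<exists>F G.
      (\<forall>t. continuous_map (realization (K t)) (realization (K' (\<alpha> t))) (F t)) \<and>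
      (\<forall>t. continuous_map (realization (K' t)) (realization (K (\<alpha>' t))) (G t)) \<and>
      (\<forall>s t. s \<le> t \<longrightarrow>
         homotopic_with (\<lambda>_. True) (realization (K s)) (realization (K' (\<alpha> t))) (F t) (F s)) \<and>
      (\<forall>s t. s \<le> t \<longrightarrow>
         homotopic_with (\<lambda>_. True) (realization (K' s)) (realization (K (\<alpha>' t))) (G t) (G s)) \<and>
      (\<forall>t. homotopic_with (\<lambda>_. True) (realization (K t)) (realization (K (\<alpha>' (\<alpha> t))))
             (G (\<alpha> t) \<circ> F t) id) \<and>
      (\<forall>t. homotopic_with (\<lambda>_. True) (realization (K' t)) (realization (K' (\<alpha> (\<alpha>' t))))
             (F (\<alpha>' t) \<circ> G t) id))"

end

theory Submission
  imports Defs
begin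

text \<open>Every vertex has a partner under \<open>C\<close> (as \<open>Id \<subseteq> C O C'\<close>), so choosing one gives a
  simplicial map \<open>c\<close> from \<open>N\<Lambda>\<^sub>t\<close> to \<open>N\<Lambda>'\<^bsub>\<alpha> t\<^esub>\<close>, and likewise \<open>c'\<close> back.
  Their linear extensions serve as \<open>F\<^sub>t\<close> and \<open>G\<^sub>t\<close> at every level, which makes the
  compatibility conditions trivial. For a simplex \<open>\<sigma>\<close>, both \<open>\<sigma>\<close> and \<open>c' (c \<sigma>)\<close> lie in
  \<open>C' (C \<sigma>) \<in> N\<Lambda>\<^bsub>\<alpha>' (\<alpha> t)\<^esub>\<close>, so \<open>G \<circ> F\<close> and the identity send each simplex into a
  common simplex, and the straight-line homotopy between them is continuous.\<close>

lemma istopology_realization: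
  "istopology (\<lambda>U. U \<subseteq> realization_carrier K \<and>
      (\<forall>\<sigma>\<in>K. openin (top_of_set (geom_simplex \<sigma>)) (U \<inter> geom_simplex \<sigma>)))"
  unfolding istopology_def
proof (rule conjI; intro allI impI)
  fix S T
  assume "S \<subseteq> realization_carrier K \<and> (\<forall>\<sigma>\<in>K. openin (top_of_set (geom_simplex \<sigma>)) (S \<inter> geom_simplex \<sigma>))"
    and "T \<subseteq> realization_carrier K \<and> (\<forall>\<sigma>\<in>K. openin (top_of_set (geom_simplex \<sigma>)) (T \<inter> geom_simplex \<sigma>))"
  moreover have "S \<inter> T \<inter> geom_simplex \<sigma> = (S \<inter> geom_simplex \<sigma>) \<inter> (T \<inter> geom_simplex \<sigma>)" for \<sigma>
    by blast
  ultimately show "S \<inter> T \<subseteq> realization_carrier K \<and>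
      (\<forall>\<sigma>\<in>K. openin (top_of_set (geom_simplex \<sigma>)) (S \<inter> T \<inter> geom_simplex \<sigma>))"
    by (auto intro: openin_Int)
next
  fix \<U> :: "('a \<Rightarrow> real) set set"
  assume \<U>: "\<forall>U\<in>\<U>. U \<subseteq> realization_carrier K \<and>
      (\<forall>\<sigma>\<in>K. openin (top_of_set (geom_simplex \<sigma>)) (U \<inter> geom_simplex \<sigma>))"
  show "\<Union>\<U> \<subseteq> realization_carrier K \<and>
      (\<forall>\<sigma>\<in>K. openin (top_of_set (geom_simplex \<sigma>)) (\<Union>\<U> \<inter> geom_simplex \<sigma>))"
  proof (intro conjI ballI)
    show "\<Union>\<U> \<subseteq> realization_carrier K"
      using \<U> by blast
    fix \<sigma> assume "\<sigma> \<in> K"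
    have "\<Union>\<U> \<inter> geom_simplex \<sigma> = \<Union>((\<lambda>U. U \<inter> geom_simplex \<sigma>) ` \<U>)"
      by blast
    then show "openin (top_of_set (geom_simplex \<sigma>)) (\<Union>\<U> \<inter> geom_simplex \<sigma>)"
      using \<U> \<open>\<sigma> \<in> K\<close> by (metis (no_types, lifting) imageE openin_Union)
  qed
qed

lemma openin_realization:
  "openin (realization K) U \<longleftrightarrow> U \<subseteq> realization_carrier K \<and>
      (\<forall>\<sigma>\<in>K. openin (top_of_set (geom_simplex \<sigma>)) (U \<inter> geom_simplex \<sigma>))"
  unfolding realization_def using istopology_realization[of K] by simp

lemma geom_simplex_subset_realization_carrier:
  "\<sigma> \<in> K \<Longrightarrow> geom_simplex \<sigma> \<subseteq> realization_carrier K"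
  unfolding realization_carrier_def by blast

lemma topspace_realization: "topspace (realization K) = realization_carrier K"
proof (rule subset_antisym)
  show "topspace (realization K) \<subseteq> realization_carrier K"
    using openin_topspace[of "realization K"] unfolding openin_realization by blast
  have "realization_carrier K \<inter> geom_simplex \<sigma> = topspace (top_of_set (geom_simplex \<sigma>))"
    if "\<sigma> \<in> K" for \<sigma>
    using geom_simplex_subset_realization_carrier[OF that] by auto
  then have "openin (realization K) (realization_carrier K)"
    unfolding openin_realization by (metis openin_topspace order_refl)
  then show "realization_carrier K \<subseteq> topspace (realization K)"
    by (rule openin_subset)
qed

lemma continuous_map_from_realization:
  assumes "\<And>\<sigma>. \<sigma> \<in> K \<Longrightarrow> continuous_map (top_of_set (geom_simplex \<sigma>)) Y f"
    and "\<And>x. x \<in> realization_carrier K \<Longrightarrow> f x \<in> topspace Y"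
  shows "continuous_map (realization K) Y f"
  unfolding continuous_map_def topspace_realization
proof (intro conjI allI impI)
  show "f \<in> realization_carrier K \<rightarrow> topspace Y"
    using assms(2) by blast
  fix U assume U: "openin Y U"
  have "{x \<in> realization_carrier K. f x \<in> U} \<inter> geom_simplex \<sigma> =
      {x \<in> topspace (top_of_set (geom_simplex \<sigma>)). f x \<in> U}" if "\<sigma> \<in> K" for \<sigma>
    using geom_simplex_subset_realization_carrier[OF that] by auto
  then show "openin (realization K) {x \<in> realization_carrier K. f x \<in> U}"
    using openin_continuous_map_preimage[OF assms(1) U]
    by (simp add: openin_realization)
qed

lemma continuous_map_geom_simplex_realization:
  "\<tau> \<in> K \<Longrightarrow> continuous_map (top_of_set (geom_simplex \<tau>)) (realization K) id"
  unfolding continuous_map_def topspace_realization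
  using geom_simplex_subset_realization_carrier[of \<tau> K]
  by (auto simp: openin_realization Int_commute Collect_conj_eq)

lemma continuous_map_into_realization:
  assumes "\<tau> \<in> K" "continuous_on S g" "g ` S \<subseteq> geom_simplex \<tau>"
  shows "continuous_map (top_of_set S) (realization K) g"
proof -
  have "continuous_map (top_of_set S) (top_of_set (geom_simplex \<tau>)) g"
    using assms(2,3) by (auto simp: continuous_map_in_subtopology)
  from continuous_map_compose[OF this continuous_map_geom_simplex_realization[OF assms(1)]]
  show ?thesis
    by simp
qed

text \<open>The weak topology need not commute with products; compactness of \<open>N\<close> is what makes
  this set open, via the tube lemma.\<close>

lemma openin_realization_tube:
  assumes W: "\<And>\<sigma>. \<sigma> \<in> K \<Longrightarrow>
      openin (prod_topology (top_of_set S) (top_of_set (geom_simplex \<sigma>))) {p \<in> S \<times> geom_simplex \<sigma>. h p \<in> U}"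
    and N: "compact N" "N \<subseteq> S"
  shows "openin (realization K) {x \<in> realization_carrier K. \<forall>s\<in>N. h (s, x) \<in> U}"
    (is "openin _ ?B")
  unfolding openin_realization
proof (intro conjI ballI)
  fix \<sigma> assume \<sigma>: "\<sigma> \<in> K"
  have N': "compactin (top_of_set S) N"
    using N by (simp add: compactin_subtopology)
  show "openin (top_of_set (geom_simplex \<sigma>)) (?B \<inter> geom_simplex \<sigma>)"
    unfolding openin_subopen[of _ "?B \<inter> geom_simplex \<sigma>"]
  proof
    fix y assume y: "y \<in> ?B \<inter> geom_simplex \<sigma>"
    then have "N \<times> {y} \<subseteq> {p \<in> S \<times> geom_simplex \<sigma>. h p \<in> U}"
      using N(2) by blast
    then obtain S' V where S'V: "openin (top_of_set (geom_simplex \<sigma>)) V"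
      "N \<subseteq> S'" "y \<in> V" "S' \<times> V \<subseteq> {p \<in> S \<times> geom_simplex \<sigma>. h p \<in> U}"
      using tube_lemma_left[OF W[OF \<sigma>] N', of y] y by auto
    have "V \<subseteq> ?B \<inter> geom_simplex \<sigma>"
    proof
      fix v assume "v \<in> V"
      then have "v \<in> geom_simplex \<sigma>" "\<forall>s\<in>N. h (s, v) \<in> U"
        using S'V(2,4) openin_subset[OF S'V(1)] by auto
      then show "v \<in> ?B \<inter> geom_simplex \<sigma>"
        using geom_simplex_subset_realization_carrier[OF \<sigma>] by blast
    qed
    with S'V show "\<exists>T. openin (top_of_set (geom_simplex \<sigma>)) T \<and> y \<in> T \<and> T \<subseteq> ?B \<inter> geom_simplex \<sigma>"
      by blast
  qed
qed auto

lemma continuous_map_from_prod_realization: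
  fixes S :: "'b::heine_borel set"
  assumes "closed S"
    and cont: "\<And>\<sigma>. \<sigma> \<in> K \<Longrightarrow> continuous_map (top_of_set (S \<times> geom_simplex \<sigma>)) Y h"
    and top: "\<And>s x. s \<in> S \<Longrightarrow> x \<in> realization_carrier K \<Longrightarrow> h (s, x) \<in> topspace Y"
  shows "continuous_map (prod_topology (top_of_set S) (realization K)) Y h"
  unfolding continuous_map_def topspace_prod_topology topspace_realization
proof (intro conjI allI impI)
  show "h \<in> topspace (top_of_set S) \<times> realization_carrier K \<rightarrow> topspace Y"
    using top by auto
  fix U assume U: "openin Y U"
  let ?W = "{p \<in> topspace (top_of_set S) \<times> realization_carrier K. h p \<in> U}"
  have W: "openin (prod_topology (top_of_set S) (top_of_set (geom_simplex \<sigma>)))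
      {p \<in> S \<times> geom_simplex \<sigma>. h p \<in> U}" if "\<sigma> \<in> K" for \<sigma>
    using openin_continuous_map_preimage[OF cont[OF that] U] by simp
  show "openin (prod_topology (top_of_set S) (realization K)) ?W"
    unfolding openin_prod_topology_alt
  proof (intro allI impI)
    fix s0 x0 assume sx: "(s0, x0) \<in> ?W"
    then obtain \<sigma> where \<sigma>: "\<sigma> \<in> K" "x0 \<in> geom_simplex \<sigma>"
      unfolding realization_carrier_def by auto
    have "(s0, x0) \<in> {p \<in> S \<times> geom_simplex \<sigma>. h p \<in> U}"
      using sx \<sigma>(2) by auto
    then obtain S0 V0 where S0V0: "openin (top_of_set S) S0" "s0 \<in> S0" "x0 \<in> V0"
      "S0 \<times> V0 \<subseteq> {p \<in> S \<times> geom_simplex \<sigma>. h p \<in> U}"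
      using W[OF \<sigma>(1), unfolded openin_prod_topology_alt, rule_format] by meson
    then obtain e where "e > 0" and e_S0: "\<And>s. s \<in> S \<Longrightarrow> dist s s0 < e \<Longrightarrow> s \<in> S0"
      unfolding openin_euclidean_subtopology_iff by meson
    have e: "h (s, x0) \<in> U" if "s \<in> S" "dist s s0 < e" for s
      using S0V0(3,4) e_S0[OF that] by blast
    define N where "N = S \<inter> cball s0 (e/2)"
    define A where "A = S \<inter> ball s0 (e/2)"
    define B where "B = {x \<in> realization_carrier K. \<forall>s\<in>N. h (s, x) \<in> U}"
    have "compact N"
      unfolding N_def using \<open>closed S\<close> by (simp add: closed_Int_compact)
    then have "openin (realization K) B"
      unfolding B_def using openin_realization_tube[OF W] by (simp add: N_def)
    moreover have "openin (top_of_set S) A"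
      unfolding A_def by (simp add: openin_open_Int)
    moreover have "s0 \<in> A"
      unfolding A_def using sx \<open>e > 0\<close> by auto
    moreover have "x0 \<in> B"
      unfolding B_def N_def using e \<open>e > 0\<close> \<sigma> geom_simplex_subset_realization_carrier[OF \<sigma>(1)]
      by (auto simp: dist_commute)
    moreover have "A \<times> B \<subseteq> ?W"
      unfolding A_def B_def N_def by auto
    ultimately show "\<exists>A B. openin (top_of_set S) A \<and> openin (realization K) B \<and>
        s0 \<in> A \<and> x0 \<in> B \<and> A \<times> B \<subseteq> ?W"
      by blast
  qed
qed

lemma geom_simplex_mono:
  assumes "finite \<tau>" "\<sigma> \<subseteq> \<tau>"
  shows "geom_simplex \<sigma> \<subseteq> geom_simplex \<tau>"
proof
  fix f assume f: "f \<in> geom_simplex \<sigma>"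
  then have "sum f \<sigma> = sum f \<tau>"
    using assms by (intro sum.mono_neutral_left) (auto simp: geom_simplex_def)
  with f assms(2) show "f \<in> geom_simplex \<tau>"
    by (auto simp: geom_simplex_def)
qed

lemma geom_simplex_convex_combination:
  assumes "f \<in> geom_simplex \<tau>" "g \<in> geom_simplex \<tau>" "0 \<le> s" "s \<le> (1::real)"
  shows "(\<lambda>l. (1 - s) * f l + s * g l) \<in> geom_simplex \<tau>"
  using assms unfolding geom_simplex_def
  by (auto simp: sum.distrib sum_distrib_left[symmetric])

lemma homotopic_with_realization_segment:
  assumes f: "\<And>\<sigma>. \<sigma> \<in> K \<Longrightarrow> continuous_on (geom_simplex \<sigma>) f"
    and g: "\<And>\<sigma>. \<sigma> \<in> K \<Longrightarrow> continuous_on (geom_simplex \<sigma>) g"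
    and carrier: "\<And>\<sigma>. \<sigma> \<in> K \<Longrightarrow>
      \<exists>\<tau>\<in>K'. \<forall>x\<in>geom_simplex \<sigma>. f x \<in> geom_simplex \<tau> \<and> g x \<in> geom_simplex \<tau>"
  shows "homotopic_with (\<lambda>_. True) (realization K) (realization K') f g"
proof -
  define h where "h = (\<lambda>(s::real, x) l. (1 - s) * f x l + s * g x l)"
  have h_in: "h (s, x) \<in> geom_simplex \<tau>"
    if "s \<in> {0..1}" "f x \<in> geom_simplex \<tau>" "g x \<in> geom_simplex \<tau>" for s x \<tau>
    using that by (simp add: h_def geom_simplex_convex_combination)
  have h_cont: "continuous_on ({0..1} \<times> geom_simplex \<sigma>) h" if "\<sigma> \<in> K" for \<sigma>
  proof -
    have coord: "continuous_on ({0..1} \<times> geom_simplex \<sigma>) (\<lambda>p. k (snd p) l)"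
      if "continuous_on (geom_simplex \<sigma>) k" for k :: "_ \<Rightarrow> _ \<Rightarrow> real" and l
      using continuous_on_product_then_coordinatewise[OF that]
      by (rule continuous_on_compose2[OF _ continuous_on_snd[OF continuous_on_id]]) auto
    show ?thesis
      unfolding h_def case_prod_beta
    proof (rule continuous_on_coordinatewise_then_product)
      fix l
      show "continuous_on ({0..1} \<times> geom_simplex \<sigma>)
          (\<lambda>p. (1 - fst p) * f (snd p) l + fst p * g (snd p) l)"
        using coord[OF f[OF that], of l] coord[OF g[OF that], of l]
        by (intro continuous_on_add continuous_on_mult continuous_on_diff continuous_on_const
            continuous_on_fst continuous_on_id)
    qed
  qed
  have "continuous_map (prod_topology (top_of_set {0..1}) (realization K)) (realization K') h"
  proof (rule continuous_map_from_prod_realization[OF closed_atLeastAtMost])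
    fix \<sigma> assume "\<sigma> \<in> K"
    then obtain \<tau> where "\<tau> \<in> K'"
      and fg: "\<forall>x\<in>geom_simplex \<sigma>. f x \<in> geom_simplex \<tau> \<and> g x \<in> geom_simplex \<tau>"
      using carrier by blast
    have "h ` ({0..1} \<times> geom_simplex \<sigma>) \<subseteq> geom_simplex \<tau>"
    proof clarify
      fix s x assume "s \<in> {0..1::real}" "x \<in> geom_simplex \<sigma>"
      with fg show "h (s, x) \<in> geom_simplex \<tau>"
        by (simp add: h_in)
    qed
    with \<open>\<tau> \<in> K'\<close> h_cont[OF \<open>\<sigma> \<in> K\<close>]
    show "continuous_map (top_of_set ({0..1} \<times> geom_simplex \<sigma>)) (realization K') h"
      by (rule continuous_map_into_realization)
  next
    fix s x assume "s \<in> {0..1::real}" "x \<in> realization_carrier K"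
    then obtain \<sigma> where "\<sigma> \<in> K" "x \<in> geom_simplex \<sigma>"
      unfolding realization_carrier_def by blast
    then obtain \<tau> where "\<tau> \<in> K'" "f x \<in> geom_simplex \<tau>" "g x \<in> geom_simplex \<tau>"
      using carrier by blast
    then show "h (s, x) \<in> topspace (realization K')"
      unfolding topspace_realization
      using h_in[OF \<open>s \<in> {0..1}\<close>] geom_simplex_subset_realization_carrier[of \<tau> K']
      by blast
  qed
  moreover have "h (0, x) = f x" "h (1, x) = g x" for x
    by (simp_all add: h_def)
  ultimately show ?thesis
    unfolding homotopic_with_def by (intro exI[of _ h]) simp
qed

text \<open>Summing over the support of \<open>f\<close> keeps the sum finite on every finite simplex.\<close>

definition simplicial_extension :: "('a \<Rightarrow> 'b) \<Rightarrow> ('a \<Rightarrow> real) \<Rightarrow> ('b \<Rightarrow> real)" where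
  "simplicial_extension c f = (\<lambda>y. \<Sum>x\<in>{x. f x \<noteq> 0 \<and> c x = y}. f x)"

lemma simplicial_extension_eq_sum:
  assumes "finite \<sigma>" "f \<in> geom_simplex \<sigma>"
  shows "simplicial_extension c f y = (\<Sum>x\<in>{x\<in>\<sigma>. c x = y}. f x)"
  unfolding simplicial_extension_def
  using assms by (intro sum.mono_neutral_left) (auto simp: geom_simplex_def)

lemma simplicial_extension_in_geom_simplex:
  assumes "finite \<sigma>" "f \<in> geom_simplex \<sigma>"
  shows "simplicial_extension c f \<in> geom_simplex (c ` \<sigma>)"
proof -
  have f: "\<forall>x. 0 \<le> f x" "sum f \<sigma> = 1"
    using assms(2) by (auto simp: geom_simplex_def)
  have "\<forall>y. 0 \<le> simplicial_extension c f y"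
    using f(1) by (simp add: simplicial_extension_def sum_nonneg)
  moreover have "\<forall>y. y \<notin> c ` \<sigma> \<longrightarrow> simplicial_extension c f y = 0"
  proof (intro allI impI)
    fix y assume "y \<notin> c ` \<sigma>"
    then have "{x\<in>\<sigma>. c x = y} = {}"
      by blast
    then show "simplicial_extension c f y = 0"
      unfolding simplicial_extension_eq_sum[OF assms] by (simp only: sum.empty)
  qed
  moreover have "sum (simplicial_extension c f) (c ` \<sigma>) = (\<Sum>y\<in>c ` \<sigma>. \<Sum>x\<in>{x\<in>\<sigma>. c x = y}. f x)"
    by (simp add: simplicial_extension_eq_sum[OF assms])
  moreover have "\<dots> = 1"
    using sum.image_gen[OF assms(1), of f c] f(2) by simp
  ultimately show ?thesis
    unfolding geom_simplex_def by simp
qed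

lemma continuous_on_simplicial_extension:
  assumes "finite \<sigma>"
  shows "continuous_on (geom_simplex \<sigma>) (simplicial_extension c)"
proof (rule continuous_on_coordinatewise_then_product)
  fix y
  have "continuous_on (geom_simplex \<sigma>) (\<lambda>f. \<Sum>x\<in>{x\<in>\<sigma>. c x = y}. f x)"
    by (intro continuous_on_sum continuous_on_subset[OF continuous_on_product_coordinates]) auto
  then show "continuous_on (geom_simplex \<sigma>) (\<lambda>f. simplicial_extension c f y)"
    by (rule continuous_on_cong[THEN iffD1, rotated 2])
      (auto simp: simplicial_extension_eq_sum[OF assms])
qed

lemma continuous_map_simplicial_extension:
  assumes finite: "\<And>\<sigma>. \<sigma> \<in> K \<Longrightarrow> finite \<sigma>" and simplicial: "\<And>\<sigma>. \<sigma> \<in> K \<Longrightarrow> c ` \<sigma> \<in> K'"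
  shows "continuous_map (realization K) (realization K') (simplicial_extension c)"
proof (rule continuous_map_from_realization)
  fix \<sigma> assume "\<sigma> \<in> K"
  then have "simplicial_extension c ` geom_simplex \<sigma> \<subseteq> geom_simplex (c ` \<sigma>)"
    using finite simplicial_extension_in_geom_simplex by blast
  with simplicial[OF \<open>\<sigma> \<in> K\<close>] continuous_on_simplicial_extension[OF finite[OF \<open>\<sigma> \<in> K\<close>]]
  show "continuous_map (top_of_set (geom_simplex \<sigma>)) (realization K') (simplicial_extension c)"
    by (rule continuous_map_into_realization)
next
  fix x assume "x \<in> realization_carrier K"
  then obtain \<sigma> where "\<sigma> \<in> K" "x \<in> geom_simplex \<sigma>"
    unfolding realization_carrier_def by blast
  then have "simplicial_extension c x \<in> geom_simplex (c ` \<sigma>)"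
    using finite simplicial_extension_in_geom_simplex by blast
  then show "simplicial_extension c x \<in> topspace (realization K')"
    unfolding topspace_realization
    using geom_simplex_subset_realization_carrier[OF simplicial[OF \<open>\<sigma> \<in> K\<close>]] by blast
qed

lemma dowker_nerve_finite: "\<sigma> \<in> dowker_nerve \<Lambda> t \<Longrightarrow> finite \<sigma>"
  by (simp add: dowker_nerve_def)

lemma dowker_nerve_subset: "\<sigma> \<in> dowker_nerve \<Lambda> t \<Longrightarrow> \<tau> \<subseteq> \<sigma> \<Longrightarrow> \<tau> \<in> dowker_nerve \<Lambda> t"
  unfolding dowker_nerve_def by (auto intro: finite_subset)

lemma dowker_nerve_mono: "s \<le> t \<Longrightarrow> \<sigma> \<in> dowker_nerve \<Lambda> s \<Longrightarrow> \<sigma> \<in> dowker_nerve \<Lambda> t"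
  unfolding dowker_nerve_def by (auto intro: less_le_trans)

lemma empty_in_dowker_nerve: "{} \<in> dowker_nerve \<Lambda> t"
  unfolding dowker_nerve_def by auto

lemma dowker_interleaving_sym:
  "dowker_interleaving \<Lambda> \<Lambda>' \<alpha> \<alpha>' C C' \<Longrightarrow> dowker_interleaving \<Lambda>' \<Lambda> \<alpha>' \<alpha> C' C"
  unfolding dowker_interleaving_def by blast

lemma dowker_interleaving_Image_in_nerve:
  assumes "dowker_interleaving \<Lambda> \<Lambda>' \<alpha> \<alpha>' C C'" "\<sigma> \<in> dowker_nerve \<Lambda> t"
  shows "C `` \<sigma> \<in> dowker_nerve \<Lambda>' (\<alpha> t)"
proof (cases "\<sigma> = {}")
  case True
  then show ?thesis
    by (simp add: empty_in_dowker_nerve)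
next
  case False
  with assms show ?thesis
    unfolding dowker_interleaving_def by blast
qed

definition some_partner :: "('a \<times> 'b) set \<Rightarrow> 'a \<Rightarrow> 'b" where
  "some_partner C l = (SOME l'. (l, l') \<in> C)"

lemma some_partner_in:
  assumes "dowker_interleaving \<Lambda> \<Lambda>' \<alpha> \<alpha>' C C'"
  shows "(l, some_partner C l) \<in> C"
proof -
  have "(l, l) \<in> C O C'"
    using assms unfolding dowker_interleaving_def by blast
  then obtain l' where "(l, l') \<in> C"
    by blast
  then show ?thesis
    unfolding some_partner_def by (rule someI)
qed

lemma some_partner_image_in_nerve:
  assumes "dowker_interleaving \<Lambda> \<Lambda>' \<alpha> \<alpha>' C C'" "\<sigma> \<in> dowker_nerve \<Lambda> t"
  shows "some_partner C ` \<sigma> \<in> dowker_nerve \<Lambda>' (\<alpha> t)"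
proof (rule dowker_nerve_subset[OF dowker_interleaving_Image_in_nerve[OF assms]])
  show "some_partner C ` \<sigma> \<subseteq> C `` \<sigma>"
    using some_partner_in[OF assms(1)] by blast
qed

lemma some_partner_round_trip_in_nerve:
  assumes I: "dowker_interleaving \<Lambda> \<Lambda>' \<alpha> \<alpha>' C C'" and \<sigma>: "\<sigma> \<in> dowker_nerve \<Lambda> t"
  shows "\<sigma> \<union> some_partner C' ` some_partner C ` \<sigma> \<in> dowker_nerve \<Lambda> (\<alpha>' (\<alpha> t))"
proof (rule dowker_nerve_subset)
  show "C' `` (C `` \<sigma>) \<in> dowker_nerve \<Lambda> (\<alpha>' (\<alpha> t))"
    using dowker_interleaving_Image_in_nerve[OF dowker_interleaving_sym[OF I]
        dowker_interleaving_Image_in_nerve[OF I \<sigma>]] .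
  have "Id \<subseteq> C O C'"
    using I unfolding dowker_interleaving_def by blast
  then have "\<sigma> \<subseteq> C' `` (C `` \<sigma>)"
    by blast
  moreover have "some_partner C' ` some_partner C ` \<sigma> \<subseteq> C' `` (C `` \<sigma>)"
    using some_partner_in[OF I] some_partner_in[OF dowker_interleaving_sym[OF I]] by blast
  ultimately show "\<sigma> \<union> some_partner C' ` some_partner C ` \<sigma> \<subseteq> C' `` (C `` \<sigma>)"
    by blast
qed

lemma continuous_map_some_partner_extension:
  assumes "dowker_interleaving \<Lambda> \<Lambda>' \<alpha> \<alpha>' C C'" "s \<le> t"
  shows "continuous_map (realization (dowker_nerve \<Lambda> s)) (realization (dowker_nerve \<Lambda>' (\<alpha> t)))
           (simplicial_extension (some_partner C))"
proof (rule continuous_map_simplicial_extension)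
  fix \<sigma> assume "\<sigma> \<in> dowker_nerve \<Lambda> s"
  then show "finite \<sigma>"
    by (rule dowker_nerve_finite)
  show "some_partner C ` \<sigma> \<in> dowker_nerve \<Lambda>' (\<alpha> t)"
    using some_partner_image_in_nerve[OF assms(1) dowker_nerve_mono[OF assms(2) \<open>\<sigma> \<in> _\<close>]] .
qed

lemma some_partner_extension_round_trip_homotopic_id:
  assumes I: "dowker_interleaving \<Lambda> \<Lambda>' \<alpha> \<alpha>' C C'"
  shows "homotopic_with (\<lambda>_. True) (realization (dowker_nerve \<Lambda> t))
           (realization (dowker_nerve \<Lambda> (\<alpha>' (\<alpha> t))))
           (simplicial_extension (some_partner C') \<circ> simplicial_extension (some_partner C)) id"
proof (rule homotopic_with_realization_segment)
  let ?c = "some_partner C" and ?c' = "some_partner C'"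
  fix \<sigma> assume \<sigma>: "\<sigma> \<in> dowker_nerve \<Lambda> t"
  then have "finite \<sigma>"
    by (rule dowker_nerve_finite)
  have into_c\<sigma>: "simplicial_extension ?c ` geom_simplex \<sigma> \<subseteq> geom_simplex (?c ` \<sigma>)"
    using simplicial_extension_in_geom_simplex[OF \<open>finite \<sigma>\<close>] by blast
  show "continuous_on (geom_simplex \<sigma>) (simplicial_extension ?c' \<circ> simplicial_extension ?c)"
    using continuous_on_compose[OF continuous_on_simplicial_extension[OF \<open>finite \<sigma>\<close>]
        continuous_on_subset[OF continuous_on_simplicial_extension into_c\<sigma>]]
    using \<open>finite \<sigma>\<close> by simp
  show "continuous_on (geom_simplex \<sigma>) id"
    by (rule continuous_on_id')
  let ?\<tau> = "\<sigma> \<union> ?c' ` ?c ` \<sigma>"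
  have "(simplicial_extension ?c' \<circ> simplicial_extension ?c) x \<in> geom_simplex ?\<tau>
      \<and> id x \<in> geom_simplex ?\<tau>" if "x \<in> geom_simplex \<sigma>" for x
  proof
    have "simplicial_extension ?c x \<in> geom_simplex (?c ` \<sigma>)"
      using into_c\<sigma> that by blast
    then have "simplicial_extension ?c' (simplicial_extension ?c x) \<in> geom_simplex (?c' ` ?c ` \<sigma>)"
      using \<open>finite \<sigma>\<close> by (simp add: simplicial_extension_in_geom_simplex)
    then show "(simplicial_extension ?c' \<circ> simplicial_extension ?c) x \<in> geom_simplex ?\<tau>"
      using geom_simplex_mono[of ?\<tau> "?c' ` ?c ` \<sigma>"] \<open>finite \<sigma>\<close> by auto
    show "id x \<in> geom_simplex ?\<tau>"
      using geom_simplex_mono[of ?\<tau> \<sigma>] \<open>finite \<sigma>\<close> that by auto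
  qed
  then show "\<exists>\<tau>\<in>dowker_nerve \<Lambda> (\<alpha>' (\<alpha> t)). \<forall>x\<in>geom_simplex \<sigma>.
      (simplicial_extension ?c' \<circ> simplicial_extension ?c) x \<in> geom_simplex \<tau> \<and> id x \<in> geom_simplex \<tau>"
    using some_partner_round_trip_in_nerve[OF I \<sigma>] by blast
qed

theorem corollary7p13:
  fixes \<Lambda> :: "'l \<Rightarrow> 'w \<Rightarrow> ennreal" and \<Lambda>' :: "'l2 \<Rightarrow> 'w2 \<Rightarrow> ennreal"
    and \<alpha> \<alpha>' :: "ennreal \<Rightarrow> ennreal"
  assumes "mono \<alpha>" and "mono \<alpha>'"
    and "\<And>t. t \<le> \<alpha> t" and "\<And>t. t \<le> \<alpha>' t"
    and "dowker_interleaved \<Lambda> \<Lambda>' \<alpha> \<alpha>'"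
  shows "filtered_interleaved (dowker_nerve \<Lambda>) (dowker_nerve \<Lambda>') \<alpha> \<alpha>'"
proof -
  obtain C C' where I: "dowker_interleaving \<Lambda> \<Lambda>' \<alpha> \<alpha>' C C'"
    using assms(5) unfolding dowker_interleaved_def by blast
  note I' = dowker_interleaving_sym[OF I]
  let ?F = "simplicial_extension (some_partner C)"
  let ?G = "simplicial_extension (some_partner C')"
  show ?thesis
    unfolding filtered_interleaved_def
  proof (intro exI[of _ "\<lambda>t. ?F"] exI[of _ "\<lambda>t. ?G"] conjI allI impI)
    fix s t :: ennreal assume "s \<le> t"
    show "homotopic_with (\<lambda>_. True) (realization (dowker_nerve \<Lambda> s))
        (realization (dowker_nerve \<Lambda>' (\<alpha> t))) ?F ?F"
      using continuous_map_some_partner_extension[OF I \<open>s \<le> t\<close>] by simp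
    show "homotopic_with (\<lambda>_. True) (realization (dowker_nerve \<Lambda>' s))
        (realization (dowker_nerve \<Lambda> (\<alpha>' t))) ?G ?G"
      using continuous_map_some_partner_extension[OF I' \<open>s \<le> t\<close>] by simp
  qed (use continuous_map_some_partner_extension[OF I order_refl]
      continuous_map_some_partner_extension[OF I' order_refl]
      some_partner_extension_round_trip_homotopic_id[OF I]
      some_partner_extension_round_trip_homotopic_id[OF I'] in auto)
qed

end
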